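(* $\mathcal{L}$ is closed under weak limits: if $\mu_n\in\mathcal{L}$ and $\mu_n\to\mu$ weakly for a probability measure $\mu$ on $\mathbb{R}$, then $\mu\in\mathcal{L}$.
   Context: For a probability measure $\mu$ on $\mathbb{R}$, $G_\mu(z)=\int\frac{d\mu(x)}{z-x}$ and $F_\mu=1/G_\mu$ on the upper half-plane $\mathbb{C}^+$. $\mathcal{L}$ is the set of probability measures $\mu$ on $\mathbb{R}$ with $F_\mu(z+2\pi)=F_\mu(z)+2\pi$ for all $z\in\mathbb{C}^+$. *)

theory Defs
  imports "HOL-Probability.Probability"
begin

definition cauchy_G :: "real measure \<Rightarrow> complex \<Rightarrow> complex" where
  "cauchy_G M z = (LINT x|M. 1 / (z - complex_of_real x))"

definition cauchy_F :: "real measure \<Rightarrow> complex \<Rightarrow> complex" where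
  "cauchy_F M z = 1 / cauchy_G M z"

definition class_L :: "real measure set" where
  "class_L = {M. real_distribution M \<and>
     (\<forall>z. Im z > 0 \<longrightarrow> cauchy_F M (z + 2 * complex_of_real pi) = cauchy_F M z + 2 * complex_of_real pi)}"

end

theory Submission
  imports Defs
begin

text \<open>Weak convergence gives convergence of integrals of bounded continuous functions; for
  Im z > 0 the kernel x \<mapsto> 1/(z - x) is such a function, so the Cauchy transforms converge
  pointwise on the upper half-plane. The limit G is nonzero there (its imaginary part is the
  integral of a negative function), so F_n = 1/G_n converges to F, and the functional equation
  F_n(z + 2\<pi>) = F_n(z) + 2\<pi> passes to the limit.\<close>

lemma norm_cauchy_kernel_le:
  assumes "Im z > 0"
  shows "norm (1 / (z - complex_of_real x)) \<le> 1 / Im z"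
proof -
  have "Im z \<le> cmod (z - complex_of_real x)"
    using abs_Im_le_cmod[of "z - complex_of_real x"] assms by simp
  with assms show ?thesis by (simp add: norm_divide divide_simps)
qed

lemma isCont_cauchy_kernel:
  assumes "Im z > 0"
  shows "isCont (\<lambda>x. 1 / (z - complex_of_real x)) x"
proof -
  have "z - complex_of_real x \<noteq> 0" using assms by (auto simp: complex_eq_iff)
  then show ?thesis by (intro continuous_intros) auto
qed

lemma Im_cauchy_kernel:
  "Im (1 / (z - complex_of_real x)) = - Im z / ((Re z - x)\<^sup>2 + (Im z)\<^sup>2)"
  by (simp add: Im_divide complex_norm_square[symmetric] cmod_def power2_eq_square)

lemma integrable_cauchy_kernel:
  fixes M :: "real measure"
  assumes "finite_measure M" and "sets M = sets borel" and "Im z > 0"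
  shows "integrable M (\<lambda>x. 1 / (z - complex_of_real x))"
proof (rule finite_measure.integrable_const_bound[OF assms(1), where B = "1 / Im z"])
  show "(\<lambda>x. 1 / (z - complex_of_real x)) \<in> borel_measurable M"
    using isCont_cauchy_kernel[OF assms(3)] measurable_cong_sets[OF assms(2) refl]
    by (auto intro!: borel_measurable_continuous_onI continuous_at_imp_continuous_on)
qed (use norm_cauchy_kernel_le[OF assms(3)] in auto)

lemma Im_cauchy_G_neg:
  assumes "real_distribution M" and "Im z > 0"
  shows "Im (cauchy_G M z) < 0"
proof -
  interpret real_distribution M by fact
  define g where "g x = Im z / ((Re z - x)\<^sup>2 + (Im z)\<^sup>2)" for x
  have g_pos: "g x > 0" for x
    using assms(2) unfolding g_def by (auto intro!: divide_pos_pos add_nonneg_pos)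
  have kernel_int: "integrable M (\<lambda>x. 1 / (z - complex_of_real x))"
    by (rule integrable_cauchy_kernel[OF finite_measure_axioms _ assms(2)]) simp
  have g_eq: "g = (\<lambda>x. - Im (1 / (z - complex_of_real x)))"
    by (simp add: Im_cauchy_kernel g_def fun_eq_iff)
  then have g_int: "integrable M g"
    using integrable_minus[OF integrable_Im[OF kernel_int]] by simp
  have "integral\<^sup>L M g \<noteq> 0"
  proof
    assume "integral\<^sup>L M g = 0"
    then have "AE x in M. g x = 0"
      using integral_nonneg_eq_0_iff_AE[OF g_int] g_pos by (auto intro: less_imp_le)
    then show False using g_pos by (auto dest: AE_E simp: less_le)
  qed
  moreover have "integral\<^sup>L M g \<ge> 0"
    using g_pos by (auto intro: integral_nonneg_AE less_imp_le)
  moreover have "Im (cauchy_G M z) = - integral\<^sup>L M g"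
    unfolding cauchy_G_def integral_Im[OF kernel_int, symmetric] g_eq by simp
  ultimately show ?thesis by linarith
qed

lemma cauchy_G_nonzero:
  assumes "real_distribution M" and "Im z > 0"
  shows "cauchy_G M z \<noteq> 0"
  using Im_cauchy_G_neg[OF assms] by auto

lemma weak_conv_imp_cauchy_G_tendsto:
  assumes "\<And>n. real_distribution (Ms n)" "real_distribution M" "weak_conv_m Ms M"
    and "Im z > 0"
  shows "(\<lambda>n. cauchy_G (Ms n) z) \<longlonglongrightarrow> cauchy_G M z"
  unfolding cauchy_G_def
  by (rule weak_conv_imp_integral_bdd_continuous_conv[OF assms(1-3), where B = "1 / Im z"])
     (use isCont_cauchy_kernel[OF assms(4)] norm_cauchy_kernel_le[OF assms(4)] in auto)

lemma weak_conv_imp_cauchy_F_tendsto: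
  assumes "\<And>n. real_distribution (Ms n)" "real_distribution M" "weak_conv_m Ms M"
    and "Im z > 0"
  shows "(\<lambda>n. cauchy_F (Ms n) z) \<longlonglongrightarrow> cauchy_F M z"
  unfolding cauchy_F_def
  by (intro tendsto_divide tendsto_const weak_conv_imp_cauchy_G_tendsto[OF assms]
        cauchy_G_nonzero[OF assms(2,4)])

theorem proposition3p14:
  fixes M_seq :: "nat \<Rightarrow> real measure" and M :: "real measure"
  assumes "\<And>n. M_seq n \<in> class_L"
    and "real_distribution M"
    and "weak_conv_m M_seq M"
  shows "M \<in> class_L"
proof -
  let ?c = "2 * complex_of_real pi"
  have distr: "\<And>n. real_distribution (M_seq n)"
    and periodic: "\<And>n z. Im z > 0 \<Longrightarrow> cauchy_F (M_seq n) (z + ?c) = cauchy_F (M_seq n) z + ?c"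
    using assms(1) by (simp_all add: class_L_def)
  note F_tendsto = weak_conv_imp_cauchy_F_tendsto[OF distr assms(2,3)]
  have "cauchy_F M (z + ?c) = cauchy_F M z + ?c" if z: "Im z > 0" for z
  proof (rule LIMSEQ_unique)
    show "(\<lambda>n. cauchy_F (M_seq n) (z + ?c)) \<longlonglongrightarrow> cauchy_F M (z + ?c)"
      using z by (intro F_tendsto) simp
    show "(\<lambda>n. cauchy_F (M_seq n) (z + ?c)) \<longlonglongrightarrow> cauchy_F M z + ?c"
      unfolding periodic[OF z] by (intro tendsto_add F_tendsto[OF z] tendsto_const)
  qed
  then show ?thesis using assms(2) by (simp add: class_L_def)
qed

end
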